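(* (1) For each $g\in\Bbbk[x]$ there is a unique derivation $d_g:A\to A$ with $d_g(x)=0$ and $d_g(y)=g$; it is locally nilpotent, it is inner if and only if $g\in x^N\Bbbk[x]$, and $\exp(td_g)=\phi_{tg,1}$ for all $t\in\Bbbk$. (2) Every locally nilpotent derivation $d$ of $A$ equals $d_g$ for exactly one $g\in\Bbbk[x]$.
   Context: Let $\Bbbk$ be a field of characteristic zero and $N\geq1$ an integer. Let $A=A_N$ be the $\Bbbk$-algebra generated by $x,y$ subject to the relation $yx-xy=x^N$. A derivation $d$ is locally nilpotent if for each $a\in A$ there is $n$ with $d^n(a)=0$. For $f\in\Bbbk[x]$, $\lambda\in\Bbbk^\times$, $\phi_{f,\lambda}$ denotes the algebra automorphism of $A$ with $\phi_{f,\lambda}(x)=\lambda x$, $\phi_{f,\lambda}(y)=\lambda^{N-1}y+f$. *)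

theory Defs
  imports "HOL-Computational_Algebra.Polynomial"
begin

text \<open>Concrete model of A_N = k<x,y>/(yx - xy = x^N) via its PBW basis:
  an element is a polynomial in y with left coefficients in k[x],
  a = sum_j (coeff a j) y^j, represented as 'k poly poly (outer variable y).
  Multiplication uses y^j p = sum_i (j choose i) delta^i(p) y^(j-i),
  where delta = x^N d/dx, i.e. [y,p] = x^N p'.\<close>

definition deltaN :: "nat \<Rightarrow> 'k::field poly \<Rightarrow> 'k poly" where
  "deltaN N p = monom 1 N * pderiv p"

definition mulA :: "nat \<Rightarrow> 'k::field poly poly \<Rightarrow> 'k poly poly \<Rightarrow> 'k poly poly" where
  "mulA N a b = (\<Sum>j\<le>degree a. \<Sum>l\<le>degree b. \<Sum>i\<le>j.
      monom (coeff a j * (of_nat (j choose i) * (deltaN N ^^ i) (coeff b l))) (j - i + l))"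

definition scaleA :: "'k::field \<Rightarrow> 'k poly poly \<Rightarrow> 'k poly poly" where
  "scaleA c a = map_poly (smult c) a"

definition xA :: "'k::field poly poly" where
  "xA = [: monom 1 1 :]"

definition yA :: "'k::field poly poly" where
  "yA = monom 1 1"

definition powA :: "nat \<Rightarrow> 'k::field poly poly \<Rightarrow> nat \<Rightarrow> 'k poly poly" where
  "powA N b j = (mulA N b ^^ j) 1"

definition is_derivation :: "nat \<Rightarrow> ('k::field poly poly \<Rightarrow> 'k poly poly) \<Rightarrow> bool" where
  "is_derivation N D \<longleftrightarrow>
     (\<forall>a b. D (a + b) = D a + D b) \<and>
     (\<forall>c a. D (scaleA c a) = scaleA c (D a)) \<and>
     (\<forall>a b. D (mulA N a b) = mulA N (D a) b + mulA N a (D b))"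

definition locally_nilpotent :: "('k::field poly poly \<Rightarrow> 'k poly poly) \<Rightarrow> bool" where
  "locally_nilpotent D \<longleftrightarrow> (\<forall>a. \<exists>n. (D ^^ n) a = 0)"

definition inner_derivation :: "nat \<Rightarrow> ('k::field poly poly \<Rightarrow> 'k poly poly) \<Rightarrow> bool" where
  "inner_derivation N D \<longleftrightarrow> (\<exists>u. \<forall>a. D a = mulA N u a - mulA N a u)"

definition dg :: "nat \<Rightarrow> 'k::field poly \<Rightarrow> ('k poly poly \<Rightarrow> 'k poly poly)" where
  "dg N g = (THE D. is_derivation N D \<and> D xA = 0 \<and> D yA = [:g:])"

definition expA :: "'k::field_char_0 \<Rightarrow> ('k poly poly \<Rightarrow> 'k poly poly) \<Rightarrow> 'k poly poly \<Rightarrow> 'k poly poly" where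
  "expA t D a = (\<Sum>n < (LEAST m. (D ^^ m) a = 0). scaleA (t ^ n / fact n) ((D ^^ n) a))"

text \<open>phi_{f,lambda}: the algebra map with x |-> lambda x, y |-> lambda^(N-1) y + f\<close>
definition phiA :: "nat \<Rightarrow> 'k::field poly \<Rightarrow> 'k \<Rightarrow> 'k poly poly \<Rightarrow> 'k poly poly" where
  "phiA N f lam a = (\<Sum>j\<le>degree a.
      mulA N [: pcompose (coeff a j) [:0, lam:] :]
             (powA N (scaleA (lam ^ (N - 1)) yA + [:f:]) j))"

end

theory Submission
  imports Defs
begin

text \<open>
  Write elements of A in the PBW basis as \<open>\<Sum> a\<^sub>j y\<^sup>j\<close> with \<open>a\<^sub>j \<in> k[x]\<close>; left multiplication by y
  acts by \<open>y p = p y + x\<^sup>N p'\<close>. In these coordinates \<open>d\<^sub>g\<close> is the left k[x]-linear map with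
  \<open>d\<^sub>g(y\<^sup>l\<^sup>+\<^sup>1) = y d\<^sub>g(y\<^sup>l) + g y\<^sup>l\<close>; it lowers the y-degree, so it is locally nilpotent.
  If \<open>d\<^sub>g = [u, -]\<close>, then u commutes with x, which forces \<open>u \<in> k[x]\<close>, and \<open>[u, y] = -x\<^sup>N u'\<close>;
  as every polynomial has an antiderivative in characteristic 0, this happens iff \<open>x\<^sup>N\<close> divides g.
  The map \<open>exp(t d\<^sub>g)\<close> is left k[x]-linear and satisfies \<open>exp(t d\<^sub>g)(y f) = (y + t g) exp(t d\<^sub>g)(f)\<close>,
  so it sends \<open>y\<^sup>j\<close> to \<open>(y + t g)\<^sup>j\<close>, exactly as \<open>\<phi>\<^sub>t\<^sub>g\<^sub>,\<^sub>1\<close> does.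

  Conversely let D be locally nilpotent. The D-degree (the last n with \<open>D\<^sup>n a \<noteq> 0\<close>) is additive on
  products because A is a domain, so D kills every z with \<open>z | D z\<close>. Now
  \<open>D(x\<^sup>N) = D [y, x] = [D y, x] + [y, D x] \<in> x\<^sup>N A\<close>, hence \<open>D(x\<^sup>N) = 0\<close>; additivity applied to
  \<open>x\<^sup>N = x\<^sup>N\<^sup>-\<^sup>1 x\<close> gives \<open>D x = 0\<close>, so \<open>[D y, x] = 0\<close>, \<open>D y \<in> k[x]\<close> and \<open>D = d\<^bsub>D y\<^esub>\<close>.
\<close>

lemma deltaN_0 [simp]: "deltaN N 0 = 0"
  by (simp add: deltaN_def)

lemma deltaN_add: "deltaN N (p + q) = deltaN N p + deltaN N q"
  by (simp add: deltaN_def pderiv_add algebra_simps)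

lemma deltaN_mult: "deltaN N (p * q) = deltaN N p * q + p * deltaN N q"
  by (simp add: deltaN_def pderiv_mult algebra_simps)

lemma funpow_leibniz:
  fixes T :: "'r::comm_ring_1 poly \<Rightarrow> 'r poly"
  assumes add: "\<And>x y. T (x + y) = T x + T y"
    and leibniz: "\<And>u v. T (P u v) = P (S u) v + P u (R v)"
  shows "(T ^^ n) (P u v) = (\<Sum>k\<le>n. smult (of_nat (n choose k)) (P ((S ^^ k) u) ((R ^^ (n - k)) v)))"
proof (induction n)
  case 0
  then show ?case by simp
next
  case (Suc n)
  have T_0: "T 0 = 0" using add[of 0 0] by simp
  have T_sum: "T (sum f A) = (\<Sum>x\<in>A. T (f x))" for f :: "nat \<Rightarrow> 'r poly" and A
    by (induction A rule: infinite_finite_induct) (auto simp: T_0 add)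
  have T_of_nat: "T (smult (of_nat c) x) = smult (of_nat c) (T x)" for c x
    by (induction c) (simp_all add: T_0 smult_add_left add)
  define X where "X k = P ((S ^^ k) u) ((R ^^ (Suc n - k)) v)" for k
  have "(T ^^ Suc n) (P u v) = (\<Sum>k\<le>n. smult (of_nat (n choose k)) (X (Suc k)))
                              + (\<Sum>k\<le>n. smult (of_nat (n choose k)) (X k))"
    unfolding funpow.simps comp_def Suc T_sum T_of_nat leibniz X_def
    by (simp add: smult_add_right sum.distrib Suc_diff_le)
  also have "(\<Sum>k\<le>n. smult (of_nat (n choose k)) (X k))
           = (\<Sum>k\<le>Suc n. smult (of_nat (n choose k)) (X k))"
    by (simp add: binomial_eq_0)
  also have "\<dots> = X 0 + (\<Sum>k\<le>n. smult (of_nat (n choose Suc k)) (X (Suc k)))"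
    by (subst sum.atMost_Suc_shift) simp
  also have "(\<Sum>k\<le>n. smult (of_nat (n choose k)) (X (Suc k))) + \<dots>
           = X 0 + (\<Sum>k\<le>n. smult (of_nat (Suc n choose Suc k)) (X (Suc k)))"
    by (simp add: sum.distrib smult_add_left algebra_simps)
  also have "\<dots> = (\<Sum>k\<le>Suc n. smult (of_nat (Suc n choose k)) (X k))"
    by (simp add: sum.atMost_Suc_shift del: sum.atMost_Suc)
  finally show ?case by (simp add: X_def)
qed

lemma funpow_eq_0_mono:
  fixes f :: "'a::zero \<Rightarrow> 'a"
  assumes "f 0 = 0" "(f ^^ m) a = 0" "m \<le> k"
  shows "(f ^^ k) a = 0"
proof -
  have "(f ^^ n) 0 = 0" for n
    using assms(1) by (induction n) simp_all
  then show ?thesis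
    using assms(2,3) by (metis funpow_add le_add_diff_inverse2 comp_apply)
qed

lemma funpow_last_nonzero:
  fixes f :: "'a::zero \<Rightarrow> 'a"
  assumes "(f ^^ n) a = 0" "a \<noteq> 0"
  shows "\<exists>m. (f ^^ m) a \<noteq> 0 \<and> (f ^^ Suc m) a = 0"
  using assms
proof (induction n)
  case (Suc n)
  then show ?case by (cases "(f ^^ n) a = 0") auto
qed simp

lemma funpow_eq_0_if_degree_decreasing:
  fixes T :: "'a::zero poly \<Rightarrow> 'a poly"
  assumes "T 0 = 0" and decr: "\<And>f. T f = 0 \<or> degree (T f) < degree f"
  shows "degree f < n \<Longrightarrow> (T ^^ n) f = 0"
proof (induction n arbitrary: f)
  case 0
  then show ?case by simp
next
  case (Suc n)
  show ?case
  proof (cases "T f = 0")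
    case True
    show ?thesis
      by (rule funpow_eq_0_mono[of T 1, OF \<open>T 0 = 0\<close>]) (use True in simp_all)
  next
    case False
    then have "degree (T f) < n" using decr[of f] Suc.prems by auto
    then show ?thesis using Suc.IH by (simp add: funpow_Suc_right del: funpow.simps)
  qed
qed

lemma smult_sum_right: "smult c (sum f A) = (\<Sum>x\<in>A. smult c (f x))"
  by (induction A rule: infinite_finite_induct) (auto simp: smult_add_right)

section \<open>Multiplication in A\<close>

definition ypow_extend :: "(nat \<Rightarrow> 'a::comm_semiring_0 poly) \<Rightarrow> 'a poly \<Rightarrow> 'a poly" where
  "ypow_extend F a = (\<Sum>j\<le>degree a. smult (coeff a j) (F j))"

lemma ypow_extend_bound:
  assumes "degree a \<le> K"
  shows "ypow_extend F a = (\<Sum>j\<le>K. smult (coeff a j) (F j))"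
  unfolding ypow_extend_def
  by (rule sum.mono_neutral_left) (use assms in \<open>auto simp: coeff_eq_0 not_le\<close>)

lemma ypow_extend_0 [simp]: "ypow_extend F 0 = 0"
  by (simp add: ypow_extend_def)

lemma ypow_extend_add: "ypow_extend F (a + b) = ypow_extend F a + ypow_extend F b"
proof -
  define K where "K = max (degree a) (degree b)"
  have "degree (a + b) \<le> K" "degree a \<le> K" "degree b \<le> K"
    unfolding K_def by (auto intro: degree_add_le_max[THEN order.trans])
  then show ?thesis
    by (simp add: ypow_extend_bound[of _ K] smult_add_left sum.distrib)
qed

lemma ypow_extend_sum: "ypow_extend F (sum a A) = (\<Sum>x\<in>A. ypow_extend F (a x))"
  by (induction A rule: infinite_finite_induct) (auto simp: ypow_extend_add)

lemma ypow_extend_smult: "ypow_extend F (smult p a) = smult p (ypow_extend F a)"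
  unfolding ypow_extend_bound[OF degree_smult_le] by (simp add: ypow_extend_def smult_sum_right)

lemma ypow_extend_monom: "ypow_extend F (monom p l) = smult p (F l)"
  unfolding ypow_extend_bound[OF degree_monom_le] by (subst sum.remove[of _ l]) (auto simp: coeff_monom)

lemma ypow_extend_pCons:
  "ypow_extend F (pCons p a) = smult p (F 0) + ypow_extend (\<lambda>j. F (Suc j)) a"
proof -
  have "degree (pCons p a) \<le> Suc (degree a)" by (simp add: degree_pCons_le)
  then show ?thesis
    by (simp add: ypow_extend_bound ypow_extend_def sum.atMost_Suc_shift del: sum.atMost_Suc)
qed

lemma ypow_extend_monom_1 [simp]: "ypow_extend (monom 1) (a :: 'a::comm_semiring_1 poly) = a"
  by (simp add: ypow_extend_def smult_monom poly_as_sum_of_monoms)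

(* left multiplication by y, using y p = p y + x^N p' for p in k[x] *)
definition ymult :: "nat \<Rightarrow> 'k::field poly poly \<Rightarrow> 'k poly poly" where
  "ymult N f = pCons 0 f + map_poly (deltaN N) f"

lemma coeff_ymult:
  "coeff (ymult N f) n = (if n = 0 then 0 else coeff f (n - 1)) + deltaN N (coeff f n)"
  by (simp add: ymult_def coeff_map_poly coeff_pCons')

lemma ymult_add: "ymult N (f + g) = ymult N f + ymult N g"
  by (simp add: poly_eq_iff coeff_ymult deltaN_add)

lemma ymult_diff: "ymult N (f - g) = ymult N f - ymult N g"
  by (simp add: poly_eq_iff coeff_ymult deltaN_def pderiv_diff algebra_simps)

lemma ymult_smult: "ymult N (smult p f) = smult (deltaN N p) f + smult p (ymult N f)"
  by (simp add: poly_eq_iff coeff_ymult deltaN_mult algebra_simps)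

lemma ymult_monom_1: "ymult N (monom 1 l) = monom 1 (Suc l)"
  by (simp add: poly_eq_iff coeff_ymult coeff_monom deltaN_def)

lemma ymult_const: "ymult N [:p:] = monom p 1 + [:deltaN N p:]"
  by (simp add: poly_eq_iff coeff_ymult coeff_monom coeff_pCons')

lemma degree_ymult_le: "degree (ymult N f) \<le> Suc (degree f)"
  by (rule degree_le) (auto simp: coeff_ymult coeff_eq_0)

lemma coeff_ymult_Suc_degree: "coeff (ymult N f) (Suc (degree f)) = lead_coeff f"
  by (simp add: coeff_ymult coeff_eq_0)

lemma funpow_ymult_add: "(ymult N ^^ j) (f + g) = (ymult N ^^ j) f + (ymult N ^^ j) g"
  by (induction j) (auto simp: ymult_add)

lemma funpow_ymult_0 [simp]: "(ymult N ^^ j) 0 = 0"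
  by (induction j) (simp_all add: ymult_def)

lemma funpow_ymult_sum: "(ymult N ^^ j) (sum f A) = (\<Sum>x\<in>A. (ymult N ^^ j) (f x))"
  by (induction A rule: infinite_finite_induct) (auto simp: funpow_ymult_add)

lemma ymult_sum: "ymult N (sum f A) = (\<Sum>x\<in>A. ymult N (f x))"
  using funpow_ymult_sum[where j=1] by simp

lemma funpow_ymult_monom_1: "(ymult N ^^ j) (monom 1 l) = monom 1 (j + l)"
  by (induction j) (auto simp: ymult_monom_1)

lemma funpow_ymult_smult:
  "(ymult N ^^ j) (smult p f)
     = (\<Sum>i\<le>j. smult (of_nat (j choose i)) (smult ((deltaN N ^^ i) p) ((ymult N ^^ (j - i)) f)))"
  by (rule funpow_leibniz) (simp_all add: ymult_add ymult_smult)

lemma funpow_ymult_degree: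
  "degree ((ymult N ^^ j) f) \<le> degree f + j \<and> coeff ((ymult N ^^ j) f) (degree f + j) = lead_coeff f"
proof (induction j)
  case 0
  then show ?case by simp
next
  case (Suc j)
  let ?g = "(ymult N ^^ j) f"
  show ?case
  proof (cases "degree ?g = degree f + j")
    case True
    then show ?thesis using degree_ymult_le[of N ?g] coeff_ymult_Suc_degree[of N ?g] Suc by simp
  next
    case False
    then have "degree ?g < degree f + j" using Suc by simp
    then have "degree (ymult N ?g) < degree f + Suc j" "coeff ?g (degree f + j) = 0"
      using degree_ymult_le[of N ?g] by (auto simp: coeff_eq_0)
    then show ?thesis using Suc by (force simp: coeff_ymult coeff_eq_0)
  qed
qed

lemma ypow_extend_add_fun: "ypow_extend (\<lambda>j. F j + G j) a = ypow_extend F a + ypow_extend G a"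
  by (simp add: ypow_extend_def smult_add_right sum.distrib)

lemma ypow_extend_monom_eq_smult: "ypow_extend (monom p) a = smult p a"
proof -
  have "smult p a = (\<Sum>j\<le>degree a. smult p (monom (coeff a j) j))"
    by (simp add: poly_as_sum_of_monoms flip: smult_sum_right)
  then show ?thesis by (simp add: ypow_extend_def smult_monom mult.commute)
qed

lemma ypow_extend_ymult:
  "ypow_extend F (ymult N a) = ypow_extend (\<lambda>j. F (Suc j)) a + ypow_extend F (map_poly (deltaN N) a)"
  by (simp add: ymult_def ypow_extend_add ypow_extend_pCons)

lemma ymult_ypow_extend:
  "ymult N (ypow_extend F a) = ypow_extend (\<lambda>j. ymult N (F j)) a + ypow_extend F (map_poly (deltaN N) a)"
  unfolding ypow_extend_bound[OF map_poly_degree_leq]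
  by (simp add: ypow_extend_def coeff_map_poly ymult_sum ymult_smult sum.distrib add.commute)

lemma mulA_eq_ypow_extend: "mulA N a b = ypow_extend (\<lambda>j. (ymult N ^^ j) b) a"
proof -
  have "ypow_extend (\<lambda>j. (ymult N ^^ j) b) a
      = (\<Sum>j\<le>degree a. smult (coeff a j) ((ymult N ^^ j) (ypow_extend (monom 1) b)))"
    unfolding ypow_extend_def[of _ a] by simp
  also have "\<dots> = (\<Sum>j\<le>degree a. \<Sum>l\<le>degree b. \<Sum>i\<le>j.
      monom (coeff a j * (of_nat (j choose i) * (deltaN N ^^ i) (coeff b l))) (j - i + l))"
    unfolding ypow_extend_def funpow_ymult_sum funpow_ymult_smult funpow_ymult_monom_1 smult_sum_right
    by (simp add: smult_monom mult.assoc)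
  finally show ?thesis by (simp add: mulA_def)
qed

lemma mulA_0_left [simp]: "mulA N 0 b = 0"
  by (simp add: mulA_eq_ypow_extend)

lemma mulA_0_right [simp]: "mulA N a 0 = 0"
  by (simp add: mulA_eq_ypow_extend ypow_extend_def)

lemma mulA_add_left: "mulA N (a + b) c = mulA N a c + mulA N b c"
  by (simp add: mulA_eq_ypow_extend ypow_extend_add)

lemma mulA_add_right: "mulA N a (b + c) = mulA N a b + mulA N a c"
  by (simp add: mulA_eq_ypow_extend ypow_extend_def funpow_ymult_add smult_add_right sum.distrib)

lemma mulA_diff_left: "mulA N (a - b) c = mulA N a c - mulA N b c"
  using mulA_add_left[of N "a - b" b c] by (simp add: algebra_simps)

lemma mulA_diff_right: "mulA N a (b - c) = mulA N a b - mulA N a c"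
  using mulA_add_right[of N a "b - c" c] by (simp add: algebra_simps)

lemma mulA_sum_left: "mulA N (sum a A) c = (\<Sum>x\<in>A. mulA N (a x) c)"
  by (simp add: mulA_eq_ypow_extend ypow_extend_sum)

lemma mulA_smult_left: "mulA N (smult p a) c = smult p (mulA N a c)"
  by (simp add: mulA_eq_ypow_extend ypow_extend_smult)

lemma mulA_monom_left: "mulA N (monom p j) c = smult p ((ymult N ^^ j) c)"
  by (simp add: mulA_eq_ypow_extend ypow_extend_monom)

lemma mulA_const_left: "mulA N [:p:] c = smult p c"
  using mulA_monom_left[of N p 0] by (simp add: monom_0)

lemma mulA_xA_left: "mulA N xA c = smult (monom 1 1) c"
  by (simp add: xA_def mulA_const_left)

lemma mulA_yA_left: "mulA N yA c = ymult N c"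
  by (simp add: yA_def mulA_monom_left)

lemma mulA_1_left [simp]: "mulA N 1 c = c"
  using mulA_const_left[of N 1 c] by (simp add: pCons_one)

lemma funpow_ymult_1: "(ymult N ^^ j) 1 = monom 1 j"
  using funpow_ymult_monom_1[where l=0] by (simp add: monom_0 pCons_one)

lemma mulA_1_right [simp]: "mulA N a 1 = a"
  by (simp add: mulA_eq_ypow_extend funpow_ymult_1)

lemma mulA_ymult_left: "mulA N (ymult N a) c = ymult N (mulA N a c)"
  by (simp add: mulA_eq_ypow_extend ypow_extend_ymult ymult_ypow_extend)

lemma mulA_assoc: "mulA N (mulA N a b) c = mulA N a (mulA N b c)"
proof -
  have funpow_ymult_left: "mulA N ((ymult N ^^ j) b) c = (ymult N ^^ j) (mulA N b c)" for j
    by (induction j) (simp_all add: mulA_ymult_left)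
  show ?thesis
    by (simp add: mulA_eq_ypow_extend[of N a] ypow_extend_def mulA_sum_left mulA_smult_left funpow_ymult_left)
qed

lemma mulA_yA_right: "mulA N a yA = pCons 0 a"
  using ypow_extend_pCons[of "monom 1" 0 a]
  by (simp add: mulA_eq_ypow_extend yA_def funpow_ymult_monom_1)

lemma scaleA_eq_smult: "scaleA c a = smult [:c:] a"
  by (simp add: scaleA_def poly_eq_iff coeff_map_poly)

lemma mulA_smult_const_right: "mulA N a (smult [:c:] b) = smult [:c:] (mulA N a b)"
proof -
  have "(ymult N ^^ j) (smult [:c:] b) = smult [:c:] ((ymult N ^^ j) b)" for j
    by (induction j) (simp_all add: ymult_smult deltaN_def)
  then show ?thesis
    by (simp add: mulA_eq_ypow_extend ypow_extend_def smult_sum_right mult.commute)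
qed

lemma coeff_mulA_degree: "coeff (mulA N a b) (degree a + degree b) = lead_coeff a * lead_coeff b"
proof -
  have "coeff (smult (coeff a j) ((ymult N ^^ j) b)) (degree a + degree b)
      = (if j = degree a then lead_coeff a * lead_coeff b else 0)" if "j \<le> degree a" for j
  proof (cases "j = degree a")
    case True
    then show ?thesis using funpow_ymult_degree[where N=N and j=j and f=b] by (simp add: add.commute)
  next
    case False
    then have "degree ((ymult N ^^ j) b) < degree a + degree b"
      using funpow_ymult_degree[where N=N and j=j and f=b] that by simp
    then show ?thesis using False by (simp add: coeff_eq_0)
  qed
  then have "(\<Sum>j\<le>degree a. coeff (smult (coeff a j) ((ymult N ^^ j) b)) (degree a + degree b))
      = (\<Sum>j\<le>degree a. if j = degree a then lead_coeff a * lead_coeff b else 0)"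
    by (intro sum.cong) auto
  then show ?thesis
    by (simp add: mulA_eq_ypow_extend ypow_extend_def coeff_sum del: coeff_smult)
qed

lemma mulA_eq_0_iff: "mulA N a b = 0 \<longleftrightarrow> a = 0 \<or> b = 0"
proof
  assume "mulA N a b = 0"
  then have "lead_coeff a * lead_coeff b = 0" using coeff_mulA_degree[of N a b] by simp
  then show "a = 0 \<or> b = 0" by simp
qed (auto simp: mulA_eq_ypow_extend ypow_extend_def)

lemma mulA_induct [case_names scalar add mult xA yA]:
  assumes scalar: "\<And>c. P (scaleA c 1)"
    and add: "\<And>a b. P a \<Longrightarrow> P b \<Longrightarrow> P (a + b)"
    and mult: "\<And>a b. P a \<Longrightarrow> P b \<Longrightarrow> P (mulA N a b)"
    and x: "P xA" and y: "P yA"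
  shows "P a"
proof -
  have const: "P [:p:]" for p
  proof (induction p)
    case 0
    then show ?case using scalar[of 0] by (simp add: scaleA_eq_smult)
  next
    case (pCons c q)
    have "[:pCons c q:] = scaleA c 1 + mulA N [:q:] xA"
      by (simp add: scaleA_eq_smult mulA_const_left xA_def monom_Suc)
    then show ?case using pCons scalar add mult x by metis
  qed
  have monom: "P (monom p j)" for p j
  proof (induction j)
    case 0
    then show ?case using const by (simp add: monom_0)
  next
    case (Suc j)
    then show ?case using mult[OF _ y] by (simp add: mulA_yA_right monom_Suc)
  qed
  have "P (\<Sum>j\<in>A. monom (coeff a j) j)" if "finite A" "A \<noteq> {}" for A
    using that by (induction A rule: finite_ne_induct) (simp_all add: monom add)
  then show ?thesis using poly_as_sum_of_monoms[of a] by (metis atMost_iff empty_iff finite_atMost le0)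
qed

section \<open>Derivations\<close>

context
  fixes N :: nat and D :: "'k::field poly poly \<Rightarrow> 'k poly poly"
  assumes der: "is_derivation N D"
begin

lemma der_add: "D (a + b) = D a + D b"
  using der by (simp add: is_derivation_def)

lemma der_scaleA: "D (scaleA c a) = scaleA c (D a)"
  using der by (simp add: is_derivation_def)

lemma der_mulA: "D (mulA N a b) = mulA N (D a) b + mulA N a (D b)"
  using der by (simp add: is_derivation_def)

lemma der_0: "D 0 = 0"
  using der_add[of 0 0] by (metis add.right_neutral add_left_cancel)

lemma der_diff: "D (a - b) = D a - D b"
  using der_add[of "a - b" b] by simp

lemma der_1: "D 1 = 0"
  using der_mulA[of 1 1] by (metis add.right_neutral add_left_cancel mulA_1_left mulA_1_right)

lemma der_scalar: "D (scaleA c 1) = 0"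
  using der_scaleA[of c 1] by (simp add: der_1 scaleA_eq_smult)

lemma funpow_der_0: "(D ^^ n) 0 = 0"
  by (induction n) (simp_all add: der_0)

lemma funpow_der_add: "(D ^^ n) (a + b) = (D ^^ n) a + (D ^^ n) b"
  by (induction n) (simp_all add: der_add)

end

lemma der_eqI:
  assumes "is_derivation N D1" "is_derivation N D2" "D1 xA = D2 xA" "D1 yA = D2 yA"
  shows "D1 = D2"
proof
  fix a
  show "D1 a = D2 a"
    by (induction a rule: mulA_induct[where N=N])
      (use assms in \<open>simp_all add: der_scalar der_add der_mulA\<close>)
qed

section \<open>The derivations \<open>d\<^sub>g\<close>\<close>

(* dg_ypow N g l = d_g(y^l), from d_g(y y^l) = g y^l + y d_g(y^l) *)
fun dg_ypow :: "nat \<Rightarrow> 'k::field poly \<Rightarrow> nat \<Rightarrow> 'k poly poly" where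
  "dg_ypow N g 0 = 0"
| "dg_ypow N g (Suc l) = ymult N (dg_ypow N g l) + monom g l"

definition dgA :: "nat \<Rightarrow> 'k::field poly \<Rightarrow> 'k poly poly \<Rightarrow> 'k poly poly" where
  "dgA N g = ypow_extend (dg_ypow N g)"

lemma dgA_add: "dgA N g (a + b) = dgA N g a + dgA N g b"
  by (simp add: dgA_def ypow_extend_add)

lemma dgA_sum: "dgA N g (sum a A) = (\<Sum>x\<in>A. dgA N g (a x))"
  by (simp add: dgA_def ypow_extend_sum)

lemma dgA_smult: "dgA N g (smult p a) = smult p (dgA N g a)"
  by (simp add: dgA_def ypow_extend_smult)

lemma dgA_ymult: "dgA N g (ymult N f) = smult g f + ymult N (dgA N g f)"
  by (simp add: dgA_def ypow_extend_ymult ymult_ypow_extend ypow_extend_add_fun ypow_extend_monom_eq_smult)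

lemma dgA_funpow_ymult: "dgA N g ((ymult N ^^ j) b) = mulA N (dg_ypow N g j) b + (ymult N ^^ j) (dgA N g b)"
proof (induction j)
  case 0
  then show ?case by (simp add: mulA_eq_ypow_extend)
next
  case (Suc j)
  then show ?case
    by (simp add: dgA_ymult mulA_add_left mulA_ymult_left mulA_monom_left ymult_add)
qed

lemma dgA_is_derivation: "is_derivation N (dgA N g)"
  unfolding is_derivation_def
proof (intro conjI allI)
  fix a b
  show "dgA N g (a + b) = dgA N g a + dgA N g b"
    by (rule dgA_add)
  show "dgA N g (mulA N a b) = mulA N (dgA N g a) b + mulA N a (dgA N g b)"
  proof -
    have "dgA N g (mulA N a b) = (\<Sum>j\<le>degree a. smult (coeff a j) (dgA N g ((ymult N ^^ j) b)))"
      by (simp add: mulA_eq_ypow_extend[of N a] ypow_extend_def dgA_sum dgA_smult)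
    also have "\<dots> = (\<Sum>j\<le>degree a. smult (coeff a j) (mulA N (dg_ypow N g j) b))
        + (\<Sum>j\<le>degree a. smult (coeff a j) ((ymult N ^^ j) (dgA N g b)))"
      by (simp add: dgA_funpow_ymult smult_add_right sum.distrib)
    finally show ?thesis
      by (simp add: dgA_def ypow_extend_def[of _ a] mulA_sum_left mulA_smult_left mulA_eq_ypow_extend[of N a])
  qed
next
  fix c a
  show "dgA N g (scaleA c a) = scaleA c (dgA N g a)"
    by (simp add: scaleA_eq_smult dgA_smult)
qed

lemma dgA_xA: "dgA N g xA = 0"
  using ypow_extend_monom[of "dg_ypow N g" "monom 1 1" 0] by (simp add: dgA_def xA_def monom_0)

lemma dgA_yA: "dgA N g yA = [:g:]"
  using ypow_extend_monom[of "dg_ypow N g" 1 1] by (simp add: dgA_def yA_def ymult_def monom_0)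

lemma ex1_derivation_xA_yA: "\<exists>!D. is_derivation N D \<and> D xA = 0 \<and> D yA = [:g:]"
  using dgA_is_derivation dgA_xA dgA_yA der_eqI by metis

lemma dg_eq_dgA: "dg N g = dgA N g"
  unfolding dg_def
  by (rule the1_equality[OF ex1_derivation_xA_yA]) (simp add: dgA_is_derivation dgA_xA dgA_yA)

lemma degree_dg_ypow_Suc_le: "degree (dg_ypow N g (Suc l)) \<le> l"
proof (induction l)
  case 0
  then show ?case by (simp add: ymult_def monom_0)
next
  case (Suc l)
  then have "degree (ymult N (dg_ypow N g (Suc l))) \<le> Suc l"
    using degree_ymult_le[of N "dg_ypow N g (Suc l)"] by linarith
  then show ?case
    unfolding dg_ypow.simps(2)[of N g "Suc l"] by (intro degree_add_le degree_monom_le)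
qed

lemma dgA_decreasing: "dgA N g f = 0 \<or> degree (dgA N g f) < degree f"
proof (cases "degree f")
  case 0
  then show ?thesis
    by (simp add: dgA_def ypow_extend_def)
next
  case (Suc k)
  have "degree (smult (coeff f l) (dg_ypow N g l)) \<le> k" if "l \<le> Suc k" for l
    using degree_dg_ypow_Suc_le[of N g "l - 1"] that degree_smult_le[of "coeff f l" "dg_ypow N g l"]
    by (cases l) auto
  then have "degree (dgA N g f) \<le> k"
    unfolding dgA_def ypow_extend_def Suc by (intro degree_sum_le) auto
  then show ?thesis using Suc by simp
qed

lemma funpow_dgA_eq_0: "degree f < n \<Longrightarrow> (dgA N g ^^ n) f = 0"
  by (rule funpow_eq_0_if_degree_decreasing[OF _ dgA_decreasing]) (simp add: dgA_def)

lemma locally_nilpotent_dgA: "locally_nilpotent (dgA N g)"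
  unfolding locally_nilpotent_def using funpow_dgA_eq_0 lessI by blast

section \<open>Inner derivations\<close>

lemma surj_pderiv: "surj (pderiv :: 'k::field_char_0 poly \<Rightarrow> 'k poly)"
proof (rule surjI)
  fix q :: "'k poly"
  have "pderiv (\<Sum>k\<le>degree q. monom (coeff q k / of_nat (Suc k)) (Suc k)) = (\<Sum>k\<le>degree q. monom (coeff q k) k)"
    by (simp add: higher_pderiv_sum[where n=1, simplified] pderiv_monom del: of_nat_Suc)
  then show "pderiv (\<Sum>k\<le>degree q. monom (coeff q k / of_nat (Suc k)) (Suc k)) = q"
    by (simp add: poly_as_sum_of_monoms)
qed

lemma is_derivation_commutator: "is_derivation N (\<lambda>a. mulA N u a - mulA N a u)"
  unfolding is_derivation_def
  by (simp add: mulA_add_left mulA_add_right mulA_diff_left mulA_diff_right mulA_smult_left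
      mulA_smult_const_right scaleA_eq_smult smult_diff_right mulA_assoc)

lemma funpow_ymult_const:
  "degree ((ymult N ^^ j) [:p:]) \<le> j" "coeff ((ymult N ^^ j) [:p:]) j = p"
  "coeff ((ymult N ^^ Suc j) [:p:]) j = of_nat (Suc j) * deltaN N p"
proof -
  show top: "degree ((ymult N ^^ j) [:p:]) \<le> j" "coeff ((ymult N ^^ j) [:p:]) j = p" for j
    using funpow_ymult_degree[where N=N and j=j and f="[:p:]"] by simp_all
  show "coeff ((ymult N ^^ Suc j) [:p:]) j = of_nat (Suc j) * deltaN N p"
  proof (induction j)
    case 0
    then show ?case by (simp add: coeff_ymult)
  next
    case (Suc j)
    then show ?case
      using coeff_ymult[of N "(ymult N ^^ Suc j) [:p:]" "Suc j"] top(2)[of "Suc j"]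
      by (simp add: funpow.simps(2)[of "Suc j"] algebra_simps del: funpow.simps)
  qed
qed

lemma coeff_mulA_const_right:
  assumes "degree u = Suc k"
  shows "coeff (mulA N u [:p:]) k = coeff u k * p + coeff u (Suc k) * (of_nat (Suc k) * deltaN N p)"
proof -
  have low: "coeff ((ymult N ^^ j) [:p:]) k = 0" if "j < k" for j
    using funpow_ymult_const(1)[where N=N and j=j and p=p] that by (simp add: coeff_eq_0)
  have "coeff (mulA N u [:p:]) k = (\<Sum>j\<le>Suc k. coeff u j * coeff ((ymult N ^^ j) [:p:]) k)"
    by (simp add: mulA_eq_ypow_extend ypow_extend_def assms coeff_sum)
  also have "\<dots> = (\<Sum>j<k. coeff u j * coeff ((ymult N ^^ j) [:p:]) k)
      + coeff u k * p + coeff u (Suc k) * (of_nat (Suc k) * deltaN N p)"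
    by (simp add: funpow_ymult_const lessThan_Suc_atMost[symmetric] del: funpow.simps)
  finally show ?thesis by (simp add: low)
qed

(* the coefficient of y^(deg u - 1) in [u, x] is (deg u) x^N lead_coeff u *)
lemma commute_xA_imp_const:
  fixes u :: "'k::field_char_0 poly poly"
  assumes "mulA N u xA = mulA N xA u"
  shows "u = [:coeff u 0:]"
proof (cases "degree u")
  case 0
  then show ?thesis by (metis degree_eq_zeroE coeff_pCons_0)
next
  case (Suc k)
  have "coeff (mulA N xA u) k = monom 1 1 * coeff u k"
    by (simp add: mulA_xA_left)
  then have "coeff u (Suc k) * (of_nat (Suc k) * deltaN N (monom 1 1)) = 0"
    using coeff_mulA_const_right[OF Suc, of N "monom 1 1"] assms by (simp add: xA_def mult.commute)
  moreover have "coeff u (Suc k) \<noteq> 0"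
  proof -
    have "u \<noteq> 0" using Suc by auto
    then show ?thesis using Suc by (metis leading_coeff_0_iff)
  qed
  ultimately show ?thesis
    by (simp add: deltaN_def pderiv_monom del: of_nat_Suc)
qed

lemma commutator_const_yA: "mulA N [:h:] yA - mulA N yA [:h:] = [:- deltaN N h:]"
  by (simp add: mulA_yA_right mulA_yA_left ymult_const monom_Suc monom_0)

lemma inner_derivation_dgA_iff:
  fixes g :: "'k::field_char_0 poly"
  shows "inner_derivation N (dgA N g) \<longleftrightarrow> monom 1 N dvd g"
proof
  assume "inner_derivation N (dgA N g)"
  then obtain u where u: "\<And>a. dgA N g a = mulA N u a - mulA N a u"
    unfolding inner_derivation_def by blast
  have "mulA N u xA = mulA N xA u"
    using u[of xA] by (simp add: dgA_xA)
  then have "u = [:coeff u 0:]" by (rule commute_xA_imp_const)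
  then have "[:g:] = [:- deltaN N (coeff u 0):]"
    using u[of yA] dgA_yA commutator_const_yA by metis
  then have "g = monom 1 N * - pderiv (coeff u 0)" by (simp add: deltaN_def)
  then show "monom 1 N dvd g" by simp
next
  assume "monom 1 N dvd g"
  then obtain q where q: "g = monom 1 N * q" by blast
  obtain h where h: "pderiv h = q" using surj_pderiv by (metis surjD)
  have "dgA N g = (\<lambda>a. mulA N [:- h:] a - mulA N a [:- h:])"
  proof (rule der_eqI[OF dgA_is_derivation is_derivation_commutator])
    show "dgA N g xA = mulA N [:- h:] xA - mulA N xA [:- h:]"
      unfolding dgA_xA by (simp add: mulA_const_left xA_def)
    show "dgA N g yA = mulA N [:- h:] yA - mulA N yA [:- h:]"
      by (simp add: dgA_yA commutator_const_yA q deltaN_def h pderiv_minus)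
  qed
  then show "inner_derivation N (dgA N g)"
    unfolding inner_derivation_def by (intro exI[of _ "[:- h:]"]) simp
qed

section \<open>The exponential of \<open>d\<^sub>g\<close>\<close>

lemma funpow_dgA_add: "(dgA N g ^^ n) (a + b) = (dgA N g ^^ n) a + (dgA N g ^^ n) b"
  by (rule funpow_der_add[OF dgA_is_derivation])

lemma funpow_dgA_smult: "(dgA N g ^^ n) (smult p f) = smult p ((dgA N g ^^ n) f)"
  by (induction n) (simp_all add: dgA_smult)

lemma funpow_dgA_ymult:
  "(dgA N g ^^ Suc n) (ymult N f)
     = ymult N ((dgA N g ^^ Suc n) f) + smult (of_nat (Suc n) * g) ((dgA N g ^^ n) f)"
proof (induction n)
  case 0
  then show ?case by (simp add: dgA_ymult)
next
  case (Suc n)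
  have "(dgA N g ^^ Suc (Suc n)) (ymult N f)
      = dgA N g (ymult N ((dgA N g ^^ Suc n) f)) + smult (of_nat (Suc n) * g) ((dgA N g ^^ Suc n) f)"
    using Suc by (simp add: dgA_add dgA_smult)
  also have "\<dots> = ymult N ((dgA N g ^^ Suc (Suc n)) f) + smult (of_nat (Suc (Suc n)) * g) ((dgA N g ^^ Suc n) f)"
    unfolding dgA_ymult of_nat_Suc[of "Suc n"] by (simp add: smult_add_left algebra_simps del: of_nat_Suc)
  finally show ?case .
qed

definition exp_coeff :: "'k::field_char_0 \<Rightarrow> nat \<Rightarrow> 'k poly" where
  "exp_coeff t n = [:t ^ n / fact n:]"

lemma exp_coeff_0 [simp]: "exp_coeff t 0 = 1"
  by (simp add: exp_coeff_def pCons_one)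

lemma exp_coeff_Suc: "exp_coeff t (Suc n) * of_nat (Suc n) = [:t:] * exp_coeff t n"
proof -
  have "t ^ Suc n / fact (Suc n) * of_nat (Suc n) = t * (t ^ n / fact n)"
    by (simp add: field_simps del: of_nat_Suc)
  then show ?thesis
    by (simp add: exp_coeff_def of_nat_poly del: of_nat_Suc)
qed

(* expA with the cut-off LEAST m. (D ^^ m) f = 0 replaced by the bound degree f + 1 *)
definition exp_dgA :: "nat \<Rightarrow> 'k::field_char_0 poly \<Rightarrow> 'k \<Rightarrow> 'k poly poly \<Rightarrow> 'k poly poly" where
  "exp_dgA N g t f = (\<Sum>n\<le>degree f. smult (exp_coeff t n) ((dgA N g ^^ n) f))"

lemma exp_dgA_bound:
  "degree f \<le> K \<Longrightarrow> exp_dgA N g t f = (\<Sum>n\<le>K. smult (exp_coeff t n) ((dgA N g ^^ n) f))"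
  unfolding exp_dgA_def by (rule sum.mono_neutral_left) (auto simp: funpow_dgA_eq_0)

lemma exp_dgA_0 [simp]: "exp_dgA N g t 0 = 0"
  by (simp add: exp_dgA_def funpow_der_0[OF dgA_is_derivation])

lemma exp_dgA_add: "exp_dgA N g t (a + b) = exp_dgA N g t a + exp_dgA N g t b"
proof -
  define K where "K = max (degree a) (degree b)"
  have "degree (a + b) \<le> K" "degree a \<le> K" "degree b \<le> K"
    unfolding K_def by (auto intro: degree_add_le_max[THEN order.trans])
  then show ?thesis
    by (simp add: exp_dgA_bound[of _ K] funpow_dgA_add smult_add_right sum.distrib)
qed

lemma exp_dgA_sum: "exp_dgA N g t (sum f A) = (\<Sum>x\<in>A. exp_dgA N g t (f x))"
  by (induction A rule: infinite_finite_induct) (auto simp: exp_dgA_add)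

lemma exp_dgA_smult: "exp_dgA N g t (smult p f) = smult p (exp_dgA N g t f)"
  unfolding exp_dgA_bound[OF degree_smult_le]
  by (simp add: exp_dgA_def funpow_dgA_smult smult_sum_right mult.commute)

lemma exp_dgA_1: "exp_dgA N g t 1 = 1"
  by (simp add: exp_dgA_def exp_coeff_def pCons_one)

lemma exp_dgA_term_ymult:
  "smult (exp_coeff t (Suc n)) ((dgA N g ^^ Suc n) (ymult N f))
     = ymult N (smult (exp_coeff t (Suc n)) ((dgA N g ^^ Suc n) f))
       + smult (smult t g) (smult (exp_coeff t n) ((dgA N g ^^ n) f))"
proof -
  have "exp_coeff t (Suc n) * (of_nat (Suc n) * g) = (exp_coeff t (Suc n) * of_nat (Suc n)) * g"
    by (simp only: mult.assoc)
  also have "\<dots> = [:t:] * exp_coeff t n * g"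
    by (simp only: exp_coeff_Suc)
  also have "\<dots> = smult t g * exp_coeff t n"
    by (simp add: mult.commute)
  finally have "exp_coeff t (Suc n) * (of_nat (Suc n) * g) = smult t g * exp_coeff t n" .
  moreover have "ymult N (smult (exp_coeff t m) h) = smult (exp_coeff t m) (ymult N h)" for m h
    by (simp add: exp_coeff_def ymult_smult deltaN_def)
  ultimately show ?thesis
    by (simp add: funpow_dgA_ymult smult_add_right del: funpow.simps)
qed

lemma exp_dgA_ymult: "exp_dgA N g t (ymult N f) = ymult N (exp_dgA N g t f) + smult (smult t g) (exp_dgA N g t f)"
proof -
  define c where "c n = smult (exp_coeff t n) ((dgA N g ^^ n) f)" for n
  define K where "K = degree f"
  have "exp_dgA N g t (ymult N f) = (\<Sum>n\<le>Suc K. smult (exp_coeff t n) ((dgA N g ^^ n) (ymult N f)))"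
    using degree_ymult_le by (intro exp_dgA_bound) (simp add: K_def)
  also have "\<dots> = ymult N (c 0) + (\<Sum>n\<le>K. ymult N (c (Suc n)) + smult (smult t g) (c n))"
    by (simp add: sum.atMost_Suc_shift exp_dgA_term_ymult c_def del: sum.atMost_Suc funpow.simps)
  also have "\<dots> = ymult N (\<Sum>n\<le>Suc K. c n) + smult (smult t g) (\<Sum>n\<le>K. c n)"
    by (simp add: sum.distrib ymult_add ymult_sum smult_sum_right sum.atMost_Suc_shift del: sum.atMost_Suc)
  also have "(\<Sum>n\<le>Suc K. c n) = exp_dgA N g t f"
    unfolding c_def by (rule exp_dgA_bound[symmetric]) (simp add: K_def)
  also have "(\<Sum>n\<le>K. c n) = exp_dgA N g t f"
    unfolding c_def K_def exp_dgA_def ..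
  finally show ?thesis .
qed

lemma exp_dgA_monom_1: "exp_dgA N g t (monom 1 j) = powA N (yA + [:smult t g:]) j"
proof (induction j)
  case 0
  then show ?case by (simp add: powA_def monom_0 pCons_one exp_dgA_1)
next
  case (Suc j)
  have "exp_dgA N g t (monom 1 (Suc j)) = exp_dgA N g t (ymult N (monom 1 j))"
    by (simp add: ymult_monom_1)
  also have "\<dots> = mulA N (yA + [:smult t g:]) (exp_dgA N g t (monom 1 j))"
    by (simp add: exp_dgA_ymult mulA_add_left mulA_yA_left mulA_const_left)
  finally have "exp_dgA N g t (monom 1 (Suc j)) = mulA N (yA + [:smult t g:]) (exp_dgA N g t (monom 1 j))" .
  then show ?case using Suc by (simp add: powA_def)
qed

lemma phiA_eq_exp_dgA: "phiA N (smult t g) 1 a = exp_dgA N g t a"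
proof -
  have "exp_dgA N g t a = exp_dgA N g t (ypow_extend (monom 1) a)"
    by simp
  also have "\<dots> = (\<Sum>j\<le>degree a. smult (coeff a j) (powA N (yA + [:smult t g:]) j))"
    by (simp only: ypow_extend_def exp_dgA_sum exp_dgA_smult exp_dgA_monom_1)
  finally show ?thesis
    unfolding phiA_def pcompose_idR by (simp add: mulA_const_left scaleA_eq_smult pCons_one)
qed

lemma expA_dgA_eq_exp_dgA: "expA t (dgA N g) a = exp_dgA N g t a"
proof -
  define M where "M = (LEAST m. (dgA N g ^^ m) a = 0)"
  have nil: "(dgA N g ^^ Suc (degree a)) a = 0"
    by (rule funpow_dgA_eq_0) simp
  have "M \<le> Suc (degree a)"
    unfolding M_def using nil by (rule Least_le)
  have "(dgA N g ^^ M) a = 0"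
    unfolding M_def using nil by (rule LeastI)
  then have vanish: "(dgA N g ^^ n) a = 0" if "M \<le> n" for n
    using that funpow_der_0[OF dgA_is_derivation] by (metis funpow_add le_add_diff_inverse2 comp_apply)
  have "expA t (dgA N g) a = (\<Sum>n<M. smult (exp_coeff t n) ((dgA N g ^^ n) a))"
    unfolding expA_def M_def scaleA_eq_smult exp_coeff_def ..
  also have "\<dots> = (\<Sum>n<Suc (degree a). smult (exp_coeff t n) ((dgA N g ^^ n) a))"
    using \<open>M \<le> Suc (degree a)\<close> vanish by (intro sum.mono_neutral_left) auto
  also have "\<dots> = exp_dgA N g t a"
    unfolding exp_dgA_def lessThan_Suc_atMost ..
  finally show ?thesis .
qed

section \<open>Locally nilpotent derivations\<close>

lemma locally_nilpotent_last_nonzero: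
  assumes "locally_nilpotent D" "a \<noteq> 0"
  obtains m where "(D ^^ m) a \<noteq> 0" "(D ^^ Suc m) a = 0"
  using assms funpow_last_nonzero unfolding locally_nilpotent_def by metis

context
  fixes N :: nat and D :: "'k::field_char_0 poly poly \<Rightarrow> 'k poly poly"
  assumes der: "is_derivation N D"
begin

lemma funpow_der_eq_0_mono: "(D ^^ m) a = 0 \<Longrightarrow> m \<le> k \<Longrightarrow> (D ^^ k) a = 0"
  by (rule funpow_eq_0_mono[where f=D]) (simp_all add: der_0[OF der])

lemma funpow_der_mulA:
  "(D ^^ n) (mulA N a b) = (\<Sum>k\<le>n. smult (of_nat (n choose k)) (mulA N ((D ^^ k) a) ((D ^^ (n - k)) b)))"
  by (rule funpow_leibniz) (simp_all add: der_add[OF der] der_mulA[OF der])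

lemma funpow_der_mulA_top:
  assumes a: "(D ^^ Suc m) a = 0" and b: "(D ^^ Suc n) b = 0"
  shows "(D ^^ (m + n)) (mulA N a b) = smult (of_nat ((m + n) choose m)) (mulA N ((D ^^ m) a) ((D ^^ n) b))"
proof -
  have "smult (of_nat ((m + n) choose k)) (mulA N ((D ^^ k) a) ((D ^^ (m + n - k)) b)) = 0"
    if "k \<noteq> m" for k
  proof (cases "k < m")
    case True
    have "(D ^^ (m + n - k)) b = 0" by (rule funpow_der_eq_0_mono[OF b]) (use True in simp)
    then show ?thesis by simp
  next
    case False
    have "(D ^^ k) a = 0" by (rule funpow_der_eq_0_mono[OF a]) (use False that in simp)
    then show ?thesis by simp
  qed
  then have "(\<Sum>k\<in>{..m + n} - {m}.
      smult (of_nat ((m + n) choose k)) (mulA N ((D ^^ k) a) ((D ^^ (m + n - k)) b))) = 0"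
    by (intro sum.neutral) blast
  then show ?thesis
    unfolding funpow_der_mulA by (simp add: sum.remove[of "{..m + n}" m])
qed

lemma funpow_der_mulA_ne_0:
  assumes "(D ^^ m) a \<noteq> 0" "(D ^^ Suc m) a = 0" "(D ^^ n) b \<noteq> 0" "(D ^^ Suc n) b = 0"
  shows "(D ^^ (m + n)) (mulA N a b) \<noteq> 0"
  using assms by (simp add: funpow_der_mulA_top mulA_eq_0_iff del: of_nat_add)

(* D z = z w would make the D-degree of z w smaller than that of z *)
lemma lnd_eq_0_if_divides:
  assumes lnd: "locally_nilpotent D" and "z \<noteq> 0" and dz: "D z = mulA N z w"
  shows "D z = 0"
proof (rule ccontr)
  assume "D z \<noteq> 0"
  then have "w \<noteq> 0" using dz by auto
  obtain m where m: "(D ^^ m) z \<noteq> 0" "(D ^^ Suc m) z = 0"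
    using locally_nilpotent_last_nonzero[OF lnd \<open>z \<noteq> 0\<close>] .
  obtain n where n: "(D ^^ n) w \<noteq> 0" "(D ^^ Suc n) w = 0"
    using locally_nilpotent_last_nonzero[OF lnd \<open>w \<noteq> 0\<close>] .
  have "(D ^^ (m + n)) (mulA N z w) = (D ^^ Suc (m + n)) z"
    unfolding dz[symmetric] by (simp add: funpow_Suc_right del: funpow.simps)
  also have "\<dots> = 0"
    using m(2) by (rule funpow_der_eq_0_mono) simp
  finally show False using funpow_der_mulA_ne_0[OF m n] by simp
qed

end

definition divisible_xN :: "nat \<Rightarrow> 'k::field poly poly \<Rightarrow> bool" where
  "divisible_xN N v \<longleftrightarrow> (\<exists>e. v = smult (monom 1 N) e)"

lemma divisible_xN_0: "divisible_xN N 0"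
  unfolding divisible_xN_def by (metis smult_0_right)

lemma divisible_xN_add: "divisible_xN N a \<Longrightarrow> divisible_xN N b \<Longrightarrow> divisible_xN N (a + b)"
  unfolding divisible_xN_def by (metis smult_add_right)

lemma divisible_xN_sum: "(\<And>x. x \<in> A \<Longrightarrow> divisible_xN N (f x)) \<Longrightarrow> divisible_xN N (sum f A)"
  by (induction A rule: infinite_finite_induct) (auto intro: divisible_xN_add divisible_xN_0)

lemma divisible_xN_smult: "divisible_xN N a \<Longrightarrow> divisible_xN N (smult p a)"
  unfolding divisible_xN_def by (metis smult_smult mult.commute)

lemma divisible_xN_ymult: "divisible_xN N a \<Longrightarrow> divisible_xN N (ymult N a)"
proof -
  assume "divisible_xN N a"
  then obtain e where e: "a = smult (monom 1 N) e" unfolding divisible_xN_def by blast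
  have "ymult N a = smult (monom 1 N) (smult (pderiv (monom 1 N)) e + ymult N e)"
    unfolding e ymult_smult by (simp add: deltaN_def smult_add_right)
  then show ?thesis unfolding divisible_xN_def by blast
qed

lemma commutator_ypow_xA_divisible_xN:
  "divisible_xN N ((ymult N ^^ j) xA - smult (monom 1 1) (monom 1 j))"
proof (induction j)
  case 0
  then show ?case by (simp add: divisible_xN_0 xA_def monom_0)
next
  case (Suc j)
  let ?x = "monom 1 1 :: 'a poly"
  have "ymult N (smult ?x (monom 1 j)) = smult (monom 1 N) (monom 1 j) + smult ?x (monom 1 (Suc j))"
    by (simp add: ymult_smult ymult_monom_1 deltaN_def pderiv_monom)
  then have "(ymult N ^^ Suc j) xA - smult ?x (monom 1 (Suc j))
      = ymult N ((ymult N ^^ j) xA - smult ?x (monom 1 j)) + smult (monom 1 N) (monom 1 j)"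
    by (simp add: ymult_diff)
  then show ?case
    using Suc divisible_xN_add divisible_xN_ymult unfolding divisible_xN_def by metis
qed

lemma commutator_xA_divisible_xN: "divisible_xN N (mulA N u xA - mulA N xA u)"
proof -
  have "mulA N xA u = smult (monom 1 1) (ypow_extend (monom 1) u)"
    by (simp add: mulA_xA_left)
  also have "\<dots> = ypow_extend (\<lambda>j. smult (monom 1 1) (monom 1 j)) u"
    unfolding ypow_extend_def smult_sum_right smult_smult by (simp add: mult.commute)
  finally have commutator: "mulA N u xA - mulA N xA u
      = (\<Sum>j\<le>degree u. smult (coeff u j) ((ymult N ^^ j) xA - smult (monom 1 1) (monom 1 j)))"
    by (simp add: mulA_eq_ypow_extend[of N u] ypow_extend_def smult_diff_right sum_subtractf)
  show ?thesis
    unfolding commutator by (intro divisible_xN_sum divisible_xN_smult commutator_ypow_xA_divisible_xN)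
qed

lemma commutator_yA_divisible_xN: "divisible_xN N (mulA N yA v - mulA N v yA)"
proof -
  have "mulA N yA v - mulA N v yA = smult (monom 1 N) (map_poly pderiv v)"
    by (simp add: mulA_yA_left mulA_yA_right poly_eq_iff coeff_ymult coeff_map_poly deltaN_def coeff_pCons')
  then show ?thesis unfolding divisible_xN_def by blast
qed

lemma commutator_yA_xA: "mulA N yA xA - mulA N xA yA = [:monom 1 N:]"
  by (simp add: mulA_yA_left mulA_yA_right xA_def ymult_const deltaN_def pderiv_pCons monom_Suc monom_0)

lemma der_xN_eq_commutators:
  assumes "is_derivation N D"
  shows "D [:monom 1 N:] = (mulA N (D yA) xA - mulA N xA (D yA)) + (mulA N yA (D xA) - mulA N (D xA) yA)"
  unfolding commutator_yA_xA[of N, symmetric] der_diff[OF assms] der_mulA[OF assms]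
  by (simp add: algebra_simps)

context
  fixes N :: nat and D :: "'k::field_char_0 poly poly \<Rightarrow> 'k poly poly"
  assumes der: "is_derivation N D" and lnd: "locally_nilpotent D"
begin

lemma lnd_xN_eq_0: "D [:monom 1 N:] = 0"
proof -
  have "divisible_xN N (D [:monom 1 N:])"
    unfolding der_xN_eq_commutators[OF der]
    by (intro divisible_xN_add commutator_xA_divisible_xN commutator_yA_divisible_xN)
  then obtain e where "D [:monom 1 N:] = mulA N [:monom 1 N:] e"
    unfolding divisible_xN_def by (auto simp: mulA_const_left)
  then show ?thesis
    by (rule lnd_eq_0_if_divides[OF der lnd, rotated]) simp
qed

lemma lnd_xA_eq_0:
  assumes "N \<ge> 1"
  shows "D xA = 0"
proof (rule ccontr)
  assume "D xA \<noteq> 0"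
  have "xA \<noteq> 0" by (simp add: xA_def)
  then obtain m where m: "(D ^^ m) xA \<noteq> 0" "(D ^^ Suc m) xA = 0"
    using locally_nilpotent_last_nonzero[OF lnd] by blast
  with \<open>D xA \<noteq> 0\<close> have "m \<noteq> 0" by (cases m) auto
  have "[:monom 1 (N - 1):] \<noteq> (0 :: 'k poly poly)" by simp
  then obtain n where n: "(D ^^ n) [:monom 1 (N - 1):] \<noteq> 0" "(D ^^ Suc n) [:monom 1 (N - 1):] = 0"
    using locally_nilpotent_last_nonzero[OF lnd] by blast
  have "(D ^^ (n + m)) (mulA N [:monom 1 (N - 1):] xA) \<noteq> 0"
    by (rule funpow_der_mulA_ne_0[OF der n m])
  moreover have "mulA N [:monom 1 (N - 1):] xA = ([:monom 1 N:] :: 'k poly poly)"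
    using assms by (simp add: mulA_const_left xA_def mult_monom)
  ultimately have "(D ^^ (n + m)) [:monom 1 N:] \<noteq> 0"
    by simp
  moreover have "(D ^^ (n + m)) [:monom 1 N:] = 0"
    by (rule funpow_der_eq_0_mono[OF der, of 1]) (use lnd_xN_eq_0 \<open>m \<noteq> 0\<close> in auto)
  ultimately show False by simp
qed

lemma lnd_eq_dgA:
  assumes "N \<ge> 1"
  shows "D = dgA N (coeff (D yA) 0)"
proof (rule der_eqI[OF der dgA_is_derivation])
  have "mulA N (D yA) xA - mulA N xA (D yA) = 0"
    using der_xN_eq_commutators[OF der] by (simp add: lnd_xN_eq_0 lnd_xA_eq_0[OF assms])
  then have D_yA: "D yA = [:coeff (D yA) 0:]"
    by (intro commute_xA_imp_const) simp
  show "D yA = dgA N (coeff (D yA) 0) yA"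
    by (subst D_yA) (simp add: dgA_yA)
  show "D xA = dgA N (coeff (D yA) 0) xA"
    by (simp add: lnd_xA_eq_0[OF assms] dgA_xA)
qed

end

theorem proposition2p8:
  fixes N :: nat
  assumes "N \<ge> 1"
  shows "(\<forall>g :: 'k::field_char_0 poly.
            (\<exists>!D. is_derivation N D \<and> D xA = 0 \<and> D yA = [:g:]) \<and>
            locally_nilpotent (dg N g) \<and>
            (inner_derivation N (dg N g) \<longleftrightarrow> monom 1 N dvd g) \<and>
            (\<forall>t. expA t (dg N g) = phiA N (smult t g) 1)) \<and>
         (\<forall>D :: 'k poly poly \<Rightarrow> 'k poly poly.
            is_derivation N D \<and> locally_nilpotent D \<longrightarrow> (\<exists>!g. D = dg N g))"
proof (intro conjI allI impI)
  fix g :: "'k poly" and t :: 'k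
  show "\<exists>!D. is_derivation N D \<and> D xA = 0 \<and> D yA = [:g:]"
    by (rule ex1_derivation_xA_yA)
  show "locally_nilpotent (dg N g)"
    by (simp add: dg_eq_dgA locally_nilpotent_dgA)
  show "inner_derivation N (dg N g) \<longleftrightarrow> monom 1 N dvd g"
    by (simp add: dg_eq_dgA inner_derivation_dgA_iff)
  show "expA t (dg N g) = phiA N (smult t g) 1"
    by (simp add: dg_eq_dgA expA_dgA_eq_exp_dgA phiA_eq_exp_dgA fun_eq_iff)
next
  fix D :: "'k poly poly \<Rightarrow> 'k poly poly"
  assume "is_derivation N D \<and> locally_nilpotent D"
  then have D: "D = dgA N (coeff (D yA) 0)"
    using lnd_eq_dgA assms by blast
  show "\<exists>!g. D = dg N g"
  proof
    show "D = dg N (coeff (D yA) 0)"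
      using D by (simp add: dg_eq_dgA)
    show "g = coeff (D yA) 0" if "D = dg N g" for g
      using that by (simp add: dg_eq_dgA dgA_yA)
  qed
qed

end
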